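(* Let $(Y,\|\cdot\|)$ be a Banach space, $(T_t)_{t\ge0}$ a strongly continuous semigroup of bounded linear operators on $Y$ with infinitesimal generator $L$ and domain $D(L)$. Let $A$ be a linear operator defined on a linear subspace $D(A)\subset Y$ with values in $Y$. Assume $\xi\colon\mathbb{R}\to D(A)$ is such that $t\mapsto\xi(t)$ is differentiable in $Y$, $t\mapsto\xi'(t)$ is continuous in $Y$, $t\mapsto A\xi(t)$ is continuous in $Y$, $t\mapsto\xi(t)$ has compact support in $\mathbb{R}$, and $$\int_s^\infty T_{u-s}\big[\xi'(u)+A\xi(u)\big]\,du=-\xi(s),\qquad s\in\mathbb{R}$$ (Riemann integral of a $Y$-valued function). Then $\xi(t)\in D(L)$ and $L\xi(t)=A\xi(t)$ for all $t\in\mathbb{R}$. *)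

theory Defs
  imports "HOL-Analysis.Analysis"
begin

text \<open>A strongly continuous (C0) semigroup of bounded linear operators on a Banach space,
  indexed by t \<ge> 0 (values of T at negative times are irrelevant).\<close>
definition strongly_continuous_semigroup :: "(real \<Rightarrow> 'a::banach \<Rightarrow> 'a) \<Rightarrow> bool" where
  "strongly_continuous_semigroup T \<longleftrightarrow>
     (\<forall>t\<ge>0. bounded_linear (T t)) \<and>
     T 0 = id \<and>
     (\<forall>s\<ge>0. \<forall>t\<ge>0. T (s + t) = T s \<circ> T t) \<and>
     (\<forall>x. ((\<lambda>t. T t x) \<longlongrightarrow> x) (at_right 0))"

definition gen_domain :: "(real \<Rightarrow> 'a::banach \<Rightarrow> 'a) \<Rightarrow> 'a set" where
  "gen_domain T = {x. \<exists>y. ((\<lambda>h. (1 / h) *\<^sub>R (T h x - x)) \<longlongrightarrow> y) (at_right 0)}"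

text \<open>The infinitesimal generator (meaningful on gen_domain T).\<close>
definition generator :: "(real \<Rightarrow> 'a::banach \<Rightarrow> 'a) \<Rightarrow> 'a \<Rightarrow> 'a" where
  "generator T x = Lim (at_right 0) (\<lambda>h. (1 / h) *\<^sub>R (T h x - x))"

definition linear_on :: "'a::real_vector set \<Rightarrow> ('a \<Rightarrow> 'b::real_vector) \<Rightarrow> bool" where
  "linear_on D A \<longleftrightarrow> subspace D \<and>
     (\<forall>x\<in>D. \<forall>y\<in>D. A (x + y) = A x + A y) \<and>
     (\<forall>c. \<forall>x\<in>D. A (c *\<^sub>R x) = c *\<^sub>R A x)"

end

theory Submission
  imports Defs
begin

text \<open>Write f = \<xi>' + A \<xi>. For h > 0, applying T h to the integral identity at s and
  comparing with the identity at s - h gives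
  T h (\<xi> s) - \<xi> (s - h) = integral over [s - h, s] of T (u - s + h) (f u) du.
  Because T is bounded near time 0 (uniform boundedness principle) and strongly continuous,
  the integrand is uniformly close to f s for small h, so the average tends to f s. Since
  (\<xi> (s - h) - \<xi> s) / h tends to -\<xi>' s, the difference quotient (T h (\<xi> s) - \<xi> s) / h
  tends to f s - \<xi>' s = A (\<xi> s).\<close>

lemma linear_bound_from_ball:
  fixes g :: "'a::real_normed_vector \<Rightarrow> 'b::real_normed_vector"
  assumes g: "linear g" and r: "r > 0" and bound: "\<And>y. y \<in> ball x0 r \<Longrightarrow> norm (g y) \<le> k"
  shows "norm (g x) \<le> (4 * k / r) * norm x"
proof (cases "x = 0")
  case True
  then show ?thesis using linear_0[OF g] by simp
next
  case False
  define c where "c = r / 2 / norm x"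
  have c: "c > 0" using False r by (simp add: c_def)
  have "norm (c *\<^sub>R x) = r / 2" using False r by (simp add: c_def)
  then have "norm (g (x0 + c *\<^sub>R x)) \<le> k" using r by (intro bound) (simp add: dist_norm)
  moreover have "norm (g x0) \<le> k" using r by (intro bound) simp
  moreover have "c *\<^sub>R g x = g (x0 + c *\<^sub>R x) - g x0"
    using g by (simp add: linear_add linear_scale)
  ultimately have "c * norm (g x) \<le> 2 * k"
    using c norm_triangle_ineq4[of "g (x0 + c *\<^sub>R x)" "g x0"] by (metis mult_2 norm_scaleR abs_of_pos order_trans add_mono)
  then have "norm (g x) \<le> 2 * k / c" using c by (simp add: field_simps)
  also have "2 * k / c = (4 * k / r) * norm x"
    using False r by (simp add: c_def field_simps)
  finally show ?thesis .
qed

lemma uniform_boundedness: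
  fixes g :: "nat \<Rightarrow> 'a::banach \<Rightarrow> 'b::real_normed_vector"
  assumes bl: "\<And>n. bounded_linear (g n)" and pointwise: "\<And>x. \<exists>B. \<forall>n. norm (g n x) \<le> B"
  shows "\<exists>M. \<forall>n x. norm (g n x) \<le> M * norm x"
proof -
  define C where "C k = (\<Inter>n. {x. norm (g n x) \<le> real k})" for k :: nat
  have closed: "closed (C k)" for k
    unfolding C_def
    by (intro closed_INT ballI closed_Collect_le continuous_intros
          linear_continuous_on bl continuous_on_const)
  have cover: "(\<Union>k. C k) = UNIV"
  proof -
    have "\<exists>k. x \<in> C k" for x
    proof -
      obtain B where "\<forall>n. norm (g n x) \<le> B" using pointwise by blast
      moreover obtain k :: nat where "B \<le> real k" using real_arch_simple by blast
      ultimately show ?thesis unfolding C_def by (auto intro: order_trans)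
    qed
    then show ?thesis by blast
  qed
  have "\<exists>k. interior (C k) \<noteq> {}"
  proof (rule ccontr)
    assume "\<not> ?thesis"
    then have "euclidean interior_of \<Union>(range C) = {}"
      by (intro Baire_category_alt) (auto simp: completely_metrizable_space_euclidean closed)
    then show False using cover by simp
  qed
  then obtain k x0 where "x0 \<in> interior (C k)" by blast
  then obtain r where r: "r > 0" "ball x0 r \<subseteq> C k"
    by (meson open_contains_ball open_interior interior_subset order_trans)
  have "norm (g n x) \<le> (4 * real k / r) * norm x" for n x
    using r unfolding C_def
    by (intro linear_bound_from_ball[OF bounded_linear.linear[OF bl]]) auto
  then show ?thesis by blast
qed

lemma tendsto_average_uniform:
  fixes g :: "real \<Rightarrow> real \<Rightarrow> 'a::real_normed_vector"
  assumes integral: "\<And>h. h > 0 \<Longrightarrow> (g h has_integral J h) {s - h..s}"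
    and uniform: "\<And>e. e > 0 \<Longrightarrow> \<exists>d>0. \<forall>h u. 0 < h \<longrightarrow> h < d \<longrightarrow> u \<in> {s - h..s} \<longrightarrow> dist (g h u) c \<le> e"
  shows "((\<lambda>h. (1 / h) *\<^sub>R J h) \<longlongrightarrow> c) (at_right 0)"
proof (rule tendstoI)
  fix e :: real assume "e > 0"
  then obtain d where d: "d > 0" "\<And>h u. 0 < h \<Longrightarrow> h < d \<Longrightarrow> u \<in> {s - h..s} \<Longrightarrow> dist (g h u) c \<le> e / 2"
    using uniform[of "e / 2"] by auto
  have "dist ((1 / h) *\<^sub>R J h) c < e" if h: "0 < h" "h < d" for h
  proof -
    have "((\<lambda>u. g h u - c) has_integral J h - h *\<^sub>R c) (cbox (s - h) s)"
      using has_integral_diff[OF integral has_integral_const_real[of c "s - h" s]] h by simp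
    moreover have "norm (g h u - c) \<le> e / 2" if "u \<in> cbox (s - h) s" for u
      using d(2)[OF h] that by (simp add: dist_norm)
    ultimately have "norm (J h - h *\<^sub>R c) \<le> e / 2 * Henstock_Kurzweil_Integration.content (cbox (s - h) s)"
      using \<open>e > 0\<close> by (intro has_integral_bound) auto
    also have "Henstock_Kurzweil_Integration.content (cbox (s - h) s) = h" using h by simp
    finally have "norm (J h - h *\<^sub>R c) \<le> e / 2 * h" .
    moreover have "(1 / h) *\<^sub>R J h - c = (1 / h) *\<^sub>R (J h - h *\<^sub>R c)"
      using h by (simp add: algebra_simps)
    ultimately have "dist ((1 / h) *\<^sub>R J h) c \<le> e / 2"
      using h by (simp add: dist_norm divide_simps)
    with \<open>e > 0\<close> show ?thesis by linarith
  qed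
  with d(1) show "\<forall>\<^sub>F h in at_right 0. dist ((1 / h) *\<^sub>R J h) c < e"
    unfolding eventually_at_right_field by blast
qed

lemma has_vector_derivative_left_quotient:
  assumes "(f has_vector_derivative f') (at x)"
  shows "((\<lambda>h. (1 / h) *\<^sub>R (f (x - h) - f x)) \<longlongrightarrow> - f') (at_right 0)"
proof -
  let ?q = "\<lambda>y. (1 / norm (y - x)) *\<^sub>R (f y - (f x + (y - x) *\<^sub>R f'))"
  have "(?q \<longlongrightarrow> 0) (at x)"
    using assms unfolding has_vector_derivative_def has_derivative_within by blast
  moreover have "filterlim (\<lambda>h. x - h) (at x) (at_right 0)"
  proof (rule filterlim_atI)
    show "((\<lambda>h. x - h) \<longlongrightarrow> x) (at_right 0)"
      using tendsto_diff[OF tendsto_const[of x] tendsto_ident_at[of 0 "{0<..}"]] by simp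
    show "\<forall>\<^sub>F h in at_right 0. x - h \<noteq> x"
      using eventually_at_right_less[of "0::real"] by eventually_elim simp
  qed
  ultimately have "((\<lambda>h. ?q (x - h)) \<longlongrightarrow> 0) (at_right 0)"
    by (rule filterlim_compose)
  moreover have "\<forall>\<^sub>F h in at_right 0. ?q (x - h) = (1 / h) *\<^sub>R (f (x - h) - f x) - - f'"
    using eventually_at_right_less[of "0::real"]
    by eventually_elim (simp add: algebra_simps)
  ultimately show ?thesis
    by (rule LIM_zero_cancel[OF Lim_transform_eventually])
qed

context
  fixes T :: "real \<Rightarrow> 'a::banach \<Rightarrow> 'a"
  assumes sg: "strongly_continuous_semigroup T"
begin

lemma semigroup_bounded_linear: "t \<ge> 0 \<Longrightarrow> bounded_linear (T t)"
  using sg unfolding strongly_continuous_semigroup_def by blast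

lemma semigroup_zero: "T 0 x = x"
  using sg unfolding strongly_continuous_semigroup_def by simp

lemma semigroup_add: "a \<ge> 0 \<Longrightarrow> b \<ge> 0 \<Longrightarrow> T (a + b) x = T a (T b x)"
  using sg unfolding strongly_continuous_semigroup_def by simp

lemma semigroup_continuous_at_0: "continuous (at 0 within {0..}) (\<lambda>t. T t x)"
  using sg unfolding strongly_continuous_semigroup_def continuous_within
  by (simp add: at_within_Ici_at_right)

lemma semigroup_locally_bounded:
  "\<exists>d>0. \<exists>M. \<forall>v x. 0 \<le> v \<and> v \<le> d \<longrightarrow> norm (T v x) \<le> M * norm x"
proof (rule ccontr)
  assume "\<not> ?thesis"
  then have "\<forall>n::nat. \<exists>v x. 0 \<le> v \<and> v \<le> 1 / Suc n \<and> norm (T v x) > real n * norm x"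
    by (metis not_le of_nat_0_less_iff zero_less_Suc zero_less_divide_1_iff)
  then obtain v xs where v: "\<And>n. 0 \<le> v n" "\<And>n. v n \<le> 1 / Suc n"
    and xs: "\<And>n. norm (T (v n) (xs n)) > real n * norm (xs n)"
    by metis
  have "v \<longlonglongrightarrow> 0"
    using v by (intro real_tendsto_sandwich[OF _ _ tendsto_const LIMSEQ_inverse_real_of_nat])
      (auto simp: inverse_eq_divide)
  then have "(\<lambda>n. T (v n) x) \<longlonglongrightarrow> T 0 x" for x
    using v by (intro continuous_within_tendsto_compose[OF semigroup_continuous_at_0]) auto
  then have "\<exists>B. \<forall>n. norm (T (v n) x) \<le> B" for x
    by (meson BseqE convergentI convergent_imp_Bseq)
  then obtain M where M: "\<And>n x. norm (T (v n) x) \<le> M * norm x"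
    using uniform_boundedness[of "\<lambda>n. T (v n)"] semigroup_bounded_linear v(1) by metis
  obtain n :: nat where "M \<le> real n" using real_arch_simple by blast
  then have "M * norm (xs n) \<le> real n * norm (xs n)" by (simp add: mult_right_mono)
  with M[of n "xs n"] xs[of n] show False by simp
qed

lemma semigroup_near_identity:
  assumes f: "isCont f s" and e: "e > 0"
  obtains d where "d > 0" "\<And>v u. 0 \<le> v \<Longrightarrow> v < d \<Longrightarrow> dist u s < d \<Longrightarrow> dist (T v (f u)) (f s) \<le> e"
proof -
  obtain d0 M0 where d0: "d0 > 0" and M0: "\<And>v x. 0 \<le> v \<Longrightarrow> v \<le> d0 \<Longrightarrow> norm (T v x) \<le> M0 * norm x"
    using semigroup_locally_bounded by blast
  define M where "M = max M0 1"
  have "M > 0" by (simp add: M_def)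
  have M: "norm (T v x) \<le> M * norm x" if "0 \<le> v" "v \<le> d0" for v x
    using M0[OF that, of x] mult_right_mono[of M0 M "norm x"] by (simp add: M_def)
  have "e / (2 * M) > 0" using e \<open>M > 0\<close> by simp
  then obtain d1 where d1: "d1 > 0" "\<And>u. dist u s < d1 \<Longrightarrow> dist (f u) (f s) < e / (2 * M)"
    using f unfolding continuous_at_eps_delta by blast
  have "e / 2 > 0" using e by simp
  then obtain d2 where d2: "d2 > 0" "\<And>v. v \<in> {0..} \<Longrightarrow> dist v 0 < d2 \<Longrightarrow> dist (T v (f s)) (f s) < e / 2"
    using semigroup_continuous_at_0[of "f s"] unfolding continuous_within_eps_delta semigroup_zero
    by blast
  show ?thesis
  proof
    show "min d0 (min d1 d2) > 0" using d0 d1 d2 by simp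
    fix v u assume v: "0 \<le> v" "v < min d0 (min d1 d2)" and u: "dist u s < min d0 (min d1 d2)"
    have "norm (T v (f u - f s)) \<le> M * norm (f u - f s)"
      using M v by simp
    also have "\<dots> \<le> M * (e / (2 * M))"
      using d1(2)[of u] u \<open>M > 0\<close> by (intro mult_left_mono) (auto simp: dist_norm)
    also have "\<dots> = e / 2" using \<open>M > 0\<close> by simp
    finally have "norm (T v (f u - f s)) \<le> e / 2" .
    moreover have "norm (T v (f s) - f s) < e / 2"
      using d2(2)[of v] v by (simp add: dist_norm)
    moreover have "T v (f u) - f s = T v (f u - f s) + (T v (f s) - f s)"
      using semigroup_bounded_linear[OF v(1)] by (simp add: linear_diff bounded_linear.linear)
    then have "dist (T v (f u)) (f s) \<le> norm (T v (f u - f s)) + norm (T v (f s) - f s)"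
      by (metis dist_norm norm_triangle_ineq)
    ultimately show "dist (T v (f u)) (f s) \<le> e" by linarith
  qed
qed

lemma semigroup_integral_shift:
  assumes integral: "\<And>s. ((\<lambda>u. T (u - s) (f u)) has_integral - \<xi> s) {s..}" and h: "h > 0"
  shows "((\<lambda>u. T (u - (s - h)) (f u)) has_integral T h (\<xi> s) - \<xi> (s - h)) {s - h..s}"
proof -
  let ?g = "\<lambda>u. T (u - (s - h)) (f u)"
  have Th: "bounded_linear (T h)" using h by (simp add: semigroup_bounded_linear)
  have shift: "(T h \<circ> (\<lambda>u. T (u - s) (f u))) u = ?g u" if "u \<in> {s..}" for u
    using semigroup_add[of h "u - s"] that h by (simp add: algebra_simps)
  have "(?g has_integral T h (- \<xi> s)) {s..}"
    by (rule has_integral_cong[THEN iffD1, OF shift has_integral_linear[OF integral Th]])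
  then have tail: "(?g has_integral - T h (\<xi> s)) {s..}"
    by (simp add: linear_neg[OF bounded_linear.linear[OF Th]])
  obtain J where J: "(?g has_integral J) {s - h..s}"
    using integrable_on_subinterval[OF has_integral_integrable[OF integral[of "s - h"]], of "s - h" s]
    by (auto simp: integrable_on_def)
  have "negligible ({s - h..s} \<inter> {s..})" "{s - h..s} \<union> {s..} = {s - h..}" using h by auto
  then have "(?g has_integral J - T h (\<xi> s)) {s - h..}"
    using has_integral_Un[OF J tail] by simp
  then have "J - T h (\<xi> s) = - \<xi> (s - h)"
    using integral[of "s - h"] by (rule has_integral_unique)
  then have "J = T h (\<xi> s) - \<xi> (s - h)"
    by (simp add: algebra_simps eq_diff_eq)
  with J show ?thesis by simp
qed

lemma semigroup_average_tendsto:
  assumes f: "isCont f s"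
    and integral: "\<And>h. h > 0 \<Longrightarrow> ((\<lambda>u. T (u - (s - h)) (f u)) has_integral J h) {s - h..s}"
  shows "((\<lambda>h. (1 / h) *\<^sub>R J h) \<longlongrightarrow> f s) (at_right 0)"
proof (rule tendsto_average_uniform[OF integral])
  fix e :: real assume "e > 0"
  then obtain d where d: "d > 0"
    and near: "\<And>v u. 0 \<le> v \<Longrightarrow> v < d \<Longrightarrow> dist u s < d \<Longrightarrow> dist (T v (f u)) (f s) \<le> e"
    using semigroup_near_identity[OF f] by blast
  have "dist (T (u - (s - h)) (f u)) (f s) \<le> e" if "0 < h" "h < d" "u \<in> {s - h..s}" for h u
    using that by (intro near) (auto simp: dist_real_def)
  with d show "\<exists>d>0. \<forall>h u. 0 < h \<longrightarrow> h < d \<longrightarrow> u \<in> {s - h..s} \<longrightarrow> dist (T (u - (s - h)) (f u)) (f s) \<le> e"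
    by blast
qed

end

lemma generatorI:
  assumes "((\<lambda>h. (1 / h) *\<^sub>R (T h x - x)) \<longlongrightarrow> y) (at_right 0)"
  shows "x \<in> gen_domain T \<and> generator T x = y"
  using assms tendsto_Lim[OF trivial_limit_at_right_real assms]
  unfolding gen_domain_def generator_def by blast

theorem theorem4p4:
  fixes T :: "real \<Rightarrow> 'a::banach \<Rightarrow> 'a"
    and A :: "'a \<Rightarrow> 'a" and DA :: "'a set"
    and \<xi> \<xi>' :: "real \<Rightarrow> 'a"
  assumes "strongly_continuous_semigroup T"
    and "linear_on DA A"
    and "\<And>t. \<xi> t \<in> DA"
    and "\<And>t. (\<xi> has_vector_derivative \<xi>' t) (at t)"
    and "continuous_on UNIV \<xi>'"
    and "continuous_on UNIV (\<lambda>t. A (\<xi> t))"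
    and "compact (closure {t. \<xi> t \<noteq> 0})"
    and "\<And>s. ((\<lambda>u. T (u - s) (\<xi>' u + A (\<xi> u))) has_integral (- \<xi> s)) {s..}"
  shows "\<forall>t. \<xi> t \<in> gen_domain T \<and> generator T (\<xi> t) = A (\<xi> t)"
proof
  fix s
  note sg = assms(1)
  let ?f = "\<lambda>u. \<xi>' u + A (\<xi> u)"
  have "isCont ?f s"
    using assms(5,6) by (simp add: continuous_on_eq_continuous_at continuous_add)
  then have "((\<lambda>h. (1 / h) *\<^sub>R (T h (\<xi> s) - \<xi> (s - h))) \<longlongrightarrow> ?f s) (at_right 0)"
    using semigroup_integral_shift[OF sg assms(8)] by (rule semigroup_average_tendsto[OF sg])
  moreover have "((\<lambda>h. (1 / h) *\<^sub>R (\<xi> (s - h) - \<xi> s)) \<longlongrightarrow> - \<xi>' s) (at_right 0)"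
    using assms(4) by (rule has_vector_derivative_left_quotient)
  ultimately have "((\<lambda>h. (1 / h) *\<^sub>R (T h (\<xi> s) - \<xi> (s - h)) + (1 / h) *\<^sub>R (\<xi> (s - h) - \<xi> s))
      \<longlongrightarrow> ?f s + - \<xi>' s) (at_right 0)"
    by (rule tendsto_add)
  then have "((\<lambda>h. (1 / h) *\<^sub>R (T h (\<xi> s) - \<xi> s)) \<longlongrightarrow> A (\<xi> s)) (at_right 0)"
    by (simp add: scaleR_right_diff_distrib[symmetric] scaleR_add_right[symmetric])
  then show "\<xi> s \<in> gen_domain T \<and> generator T (\<xi> s) = A (\<xi> s)"
    by (rule generatorI)
qed

end
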